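(* There is an absolute constant $C$ such that for all positive integers $k$ and $s$, $La^*([k]^2,\vee_s)\ge 2(s-1)k-Cs^2$.
   Context: $[k]^2$ is ordered coordinatewise. $\vee_s$ is the poset on $s+1$ elements $a,b_1,\dots,b_s$ whose only relations are $a<b_i$, $i=1,\dots,s$. For posets $P,R$, $P$ is a strong subposet of $R$ if there is an injection $i:P\to R$ with $p\le_P p'\iff i(p)\le_R i(p')$. A subset $F\subseteq Q$ is strong $P$-free if $P$ is not a strong subposet of $F$ with the induced order; $La^*(Q,P)$ is the maximum size of a strong $P$-free subset of $Q$. *)

theory Defs
  imports Complex_Main
begin

definition strong_subposet ::
  "'a set \<Rightarrow> ('a \<Rightarrow> 'a \<Rightarrow> bool) \<Rightarrow> 'b set \<Rightarrow> ('b \<Rightarrow> 'b \<Rightarrow> bool) \<Rightarrow> bool" where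
  "strong_subposet P leP R leR \<longleftrightarrow>
     (\<exists>i. inj_on i P \<and> i ` P \<subseteq> R \<and>
          (\<forall>p\<in>P. \<forall>p'\<in>P. leP p p' \<longleftrightarrow> leR (i p) (i p')))"

definition strong_free ::
  "'b set \<Rightarrow> ('b \<Rightarrow> 'b \<Rightarrow> bool) \<Rightarrow> 'a set \<Rightarrow> ('a \<Rightarrow> 'a \<Rightarrow> bool) \<Rightarrow> bool" where
  "strong_free F leQ P leP \<longleftrightarrow> \<not> strong_subposet P leP F leQ"

definition La_star ::
  "'b set \<Rightarrow> ('b \<Rightarrow> 'b \<Rightarrow> bool) \<Rightarrow> 'a set \<Rightarrow> ('a \<Rightarrow> 'a \<Rightarrow> bool) \<Rightarrow> nat" where
  "La_star Q leQ P leP = Max {card F | F. F \<subseteq> Q \<and> strong_free F leQ P leP}"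

definition grid :: "nat \<Rightarrow> (nat \<times> nat) set" where
  "grid k = {1..k} \<times> {1..k}"

definition grid_le :: "nat \<times> nat \<Rightarrow> nat \<times> nat \<Rightarrow> bool" where
  "grid_le x y \<longleftrightarrow> fst x \<le> fst y \<and> snd x \<le> snd y"

text \<open>The poset V_s on {0,...,s}: element 0 is a, element i (1 <= i <= s) is b_i;
 the only (strict) relations are a < b_i.\<close>
definition vee :: "nat \<Rightarrow> nat set" where
  "vee s = {0..s}"

definition vee_le :: "nat \<Rightarrow> nat \<Rightarrow> bool" where
  "vee_le x y \<longleftrightarrow> x = y \<or> (x = 0 \<and> y \<noteq> 0)"

end

theory Submission
  imports Defs
begin

text \<open>Remove the lower-left \<open>t \<times> t\<close> square from \<open>[k]\<^sup>2\<close>. Every remaining point has a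
  coordinate larger than \<open>t\<close>, and so does every point above it. Points of an antichain
  in \<open>[k]\<^sup>2\<close> have pairwise distinct coordinates, so at most \<open>k - t\<close> pairwise incomparable
  points lie above a given point. For \<open>t = max 0 (k + 1 - s)\<close> the set therefore contains
  no strong copy of \<open>\<or>\<^sub>s\<close>, and it has \<open>k\<^sup>2 - t\<^sup>2 \<ge> 2(s - 1)k - (s - 1)\<^sup>2\<close> elements,
  so \<open>C = 1\<close> works.\<close>

lemma card_le_La_star:
  assumes "finite Q" "F \<subseteq> Q" "strong_free F leQ P leP"
  shows "card F \<le> La_star Q leQ P leP"
proof -
  have "{card F | F. F \<subseteq> Q \<and> strong_free F leQ P leP} \<subseteq> card ` Pow Q"
    by blast
  then have "finite {card F | F. F \<subseteq> Q \<and> strong_free F leQ P leP}"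
    using assms(1) finite_subset by blast
  then show ?thesis
    unfolding La_star_def using assms(2,3) by (intro Max_ge) auto
qed

lemma strong_subposet_veeE:
  assumes "strong_subposet (vee s) vee_le F le"
  obtains a b where "a \<in> F" "\<And>j. j \<in> {1..s} \<Longrightarrow> b j \<in> F \<and> le a (b j)"
    and "\<And>j j'. j \<in> {1..s} \<Longrightarrow> j' \<in> {1..s} \<Longrightarrow> j \<noteq> j' \<Longrightarrow> \<not> le (b j) (b j')"
proof -
  obtain i where im: "i ` vee s \<subseteq> F"
    and ord: "\<forall>p\<in>vee s. \<forall>p'\<in>vee s. vee_le p p' \<longleftrightarrow> le (i p) (i p')"
    using assms unfolding strong_subposet_def by blast
  have in_vee: "0 \<in> vee s" "\<And>j. j \<in> {1..s} \<Longrightarrow> j \<in> vee s"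
    unfolding vee_def by auto
  have above: "i j \<in> F \<and> le (i 0) (i j)" if "j \<in> {1..s}" for j
  proof
    show "i j \<in> F"
      using im in_vee(2)[OF that] by blast
    have "vee_le 0 j"
      using that unfolding vee_le_def by simp
    then show "le (i 0) (i j)"
      using ord in_vee that by blast
  qed
  have antichain: "\<not> le (i j) (i j')" if "j \<in> {1..s}" "j' \<in> {1..s}" "j \<noteq> j'" for j j'
  proof -
    have "\<not> vee_le j j'"
      using that unfolding vee_le_def by simp
    then show ?thesis
      using ord in_vee(2) that(1,2) by blast
  qed
  show thesis
    using that[of "i 0" i] im in_vee(1) above antichain by blast
qed

lemma grid_incomparable_coord_neq:
  assumes "\<not> grid_le x y" "\<not> grid_le y x" "h = fst \<or> h = snd"
  shows "h x \<noteq> h y"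
  using assms unfolding grid_le_def by auto

lemma grid_antichain_card_le:
  assumes "h = fst \<or> h = snd"
    and "\<And>j j'. j \<in> J \<Longrightarrow> j' \<in> J \<Longrightarrow> j \<noteq> j' \<Longrightarrow> \<not> grid_le (b j) (b j')"
    and "\<And>j. j \<in> J \<Longrightarrow> h (b j) \<in> A" "finite A"
  shows "card J \<le> card A"
proof (rule card_inj_on_le)
  show "inj_on (h \<circ> b) J"
    using assms(1,2) grid_incomparable_coord_neq by (fastforce intro: inj_onI)
qed (use assms(3,4) in auto)

lemma strong_free_grid_diff_grid:
  assumes "k < t + s"
  shows "strong_free (grid k - grid t) grid_le (vee s) vee_le"
  unfolding strong_free_def
proof
  assume "strong_subposet (vee s) vee_le (grid k - grid t) grid_le"
  then obtain a b where a: "a \<in> grid k - grid t"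
    and above: "\<And>j. j \<in> {1..s} \<Longrightarrow> b j \<in> grid k - grid t \<and> grid_le a (b j)"
    and antichain: "\<And>j j'. j \<in> {1..s} \<Longrightarrow> j' \<in> {1..s} \<Longrightarrow> j \<noteq> j' \<Longrightarrow> \<not> grid_le (b j) (b j')"
    by (elim strong_subposet_veeE) blast
  obtain h where h: "h = fst \<or> h = snd" and "t < h a"
    using a unfolding grid_def by force
  then have "\<And>j. j \<in> {1..s} \<Longrightarrow> h (b j) \<in> {t<..k}"
    using above unfolding grid_def grid_le_def by fastforce
  then have "card {1..s} \<le> card {t<..k}"
    by (intro grid_antichain_card_le[OF h antichain]) auto
  moreover have "h a \<le> k"
    using a h unfolding grid_def by auto
  ultimately show False
    using assms \<open>t < h a\<close> by simp
qed

lemma card_grid_diff_grid: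
  assumes "t \<le> k"
  shows "card (grid k - grid t) = k\<^sup>2 - t\<^sup>2"
proof -
  have "grid t \<subseteq> grid k"
    using assms unfolding grid_def by auto
  then show ?thesis
    by (simp add: card_Diff_subset grid_def power2_eq_square)
qed

theorem theorem1p5:
  shows "\<exists>C::real. \<forall>k s :: nat. 0 < k \<longrightarrow> 0 < s \<longrightarrow>
           real (La_star (grid k) grid_le (vee s) vee_le)
             \<ge> 2 * (real s - 1) * real k - C * (real s)^2"
proof (intro exI allI impI)
  fix k s :: nat
  assume "0 < k" "0 < s"
  define t where "t = k + 1 - s"
  have "t \<le> k" "k < t + s"
    using \<open>0 < s\<close> unfolding t_def by auto
  have "real (card (grid k - grid t)) \<le> real (La_star (grid k) grid_le (vee s) vee_le)"
    using strong_free_grid_diff_grid[OF \<open>k < t + s\<close>]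
    by (intro of_nat_mono card_le_La_star) (auto simp: grid_def)
  moreover have "real (card (grid k - grid t)) = (real k)\<^sup>2 - (real t)\<^sup>2"
    using card_grid_diff_grid[OF \<open>t \<le> k\<close>] \<open>t \<le> k\<close> by (simp add: of_nat_diff power_mono)
  moreover have "(real t)\<^sup>2 \<le> (real k - (real s - 1))\<^sup>2"
  proof -
    have "\<bar>real t\<bar> \<le> \<bar>real k - (real s - 1)\<bar>"
      unfolding t_def by (cases "s \<le> k + 1") (auto simp: of_nat_diff)
    then show ?thesis
      by (simp only: abs_le_square_iff)
  qed
  moreover have "(real k - (real s - 1))\<^sup>2 = (real k)\<^sup>2 - 2 * (real s - 1) * real k + (real s - 1)\<^sup>2"
    by (simp add: power2_diff)
  moreover have "(real s - 1)\<^sup>2 \<le> 1 * (real s)\<^sup>2"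
    using \<open>0 < s\<close> by (simp add: power_mono)
  ultimately show "real (La_star (grid k) grid_le (vee s) vee_le)
      \<ge> 2 * (real s - 1) * real k - 1 * (real s)\<^sup>2"
    by linarith
qed

end
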